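(* For all positive integers $n$ and non-negative integers $k$, $$\sum_{l\ge0}\mathcal P^+_n(k,l)\Big|_{x=y=-1}=(-1)^{n+k}\frac{k+1}{n}\binom{2n}{n+k+1}.$$
   Context: Three-step paths consist of up-steps $(1,1)$, level steps $(1,0)$ and down-steps $(1,-1)$. Weights: $w((1,1))=1$, $w((1,0))=x+y$, $w((1,-1))=xy$; a path's weight is the product of its step weights. $\mathcal P^+_n(k,l)$ is the sum of weights of all three-step paths from $(0,k)$ to $(n,l)$ that never run below the $x$-axis; it is a polynomial in $x,y$, here evaluated at $x=y=-1$. Binomial coefficients $\binom ab$ are $0$ if $b>a$. *)

theory Defs
  imports Complex_Main
begin

datatype step = Up | Level | Down

fun step_dy :: "step \<Rightarrow> int" where
  "step_dy Up = 1" | "step_dy Level = 0" | "step_dy Down = -1"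

fun step_w :: "'a::comm_ring_1 \<Rightarrow> 'a \<Rightarrow> step \<Rightarrow> 'a" where
  "step_w x y Up = 1" | "step_w x y Level = x + y" | "step_w x y Down = x * y"

definition nonneg_path :: "nat \<Rightarrow> nat \<Rightarrow> nat \<Rightarrow> step list \<Rightarrow> bool" where
  "nonneg_path n k l s \<longleftrightarrow> length s = n
     \<and> (\<forall>i\<le>n. int k + sum_list (map step_dy (take i s)) \<ge> 0)
     \<and> int k + sum_list (map step_dy s) = int l"

text \<open>P^+_n(k,l), evaluated at given values of x and y.\<close>
definition Pplus :: "'a::comm_ring_1 \<Rightarrow> 'a \<Rightarrow> nat \<Rightarrow> nat \<Rightarrow> nat \<Rightarrow> 'a" where
  "Pplus x y n k l = (\<Sum>s\<in>{s. nonneg_path n k l s}. prod_list (map (step_w x y) s))"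

end

theory Submission
  imports Defs
begin

text \<open>At \<open>x = y = -1\<close> the steps weigh \<open>1, -2, 1\<close>, so the total weight \<open>W n h\<close> of
  nonnegative paths of length \<open>n\<close> starting at height \<open>h\<close> obeys
  \<open>W (n+1) h = W n (h+1) - 2 W n h + W n (h-1)\<close> with \<open>W n (-1) = 0\<close>. Pascal's rule applied
  twice shows that \<open>(-1)^(n+h) (C(2n-1, n+h) - C(2n-1, n+h+1))\<close> satisfies the same recursion
  and boundary condition, and this difference of binomials is the ballot number
  \<open>(h+1)/n C(2n, n+h+1)\<close>. Summing \<open>P\<^sup>+\<^sub>n(k,l)\<close> over all end heights \<open>l\<close> gives \<open>W n k\<close>.\<close>

fun stays_nonneg :: "int \<Rightarrow> step list \<Rightarrow> bool" where
  "stays_nonneg h [] \<longleftrightarrow> h \<ge> 0"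
| "stays_nonneg h (c # s) \<longleftrightarrow> h \<ge> 0 \<and> stays_nonneg (h + step_dy c) s"

lemma prefix_heights_nonneg_iff_stays_nonneg:
  "(\<forall>i\<le>length s. h + sum_list (map step_dy (take i s)) \<ge> 0) \<longleftrightarrow> stays_nonneg h s"
proof (induction s arbitrary: h)
  case Nil
  then show ?case by simp
next
  case (Cons c s)
  have "(\<forall>i\<le>length (c # s). h + sum_list (map step_dy (take i (c # s))) \<ge> 0) \<longleftrightarrow>
        h \<ge> 0 \<and> (\<forall>j\<le>length s. (h + step_dy c) + sum_list (map step_dy (take j s)) \<ge> 0)"
    by (simp only: length_Cons less_Suc_eq_le[symmetric] All_less_Suc2) (simp add: less_Suc_eq_le add.assoc)
  then show ?case
    using Cons.IH by simp
qed

lemma stays_nonneg_final_height: "stays_nonneg h s \<Longrightarrow> h + sum_list (map step_dy s) \<ge> 0"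
  by (induction s arbitrary: h) (force simp: add.assoc)+

lemma stays_nonneg_start: "stays_nonneg h s \<Longrightarrow> h \<ge> 0"
  by (cases s) auto

lemma height_gain_le_length: "sum_list (map step_dy s) \<le> int (length s)"
proof (induction s)
  case (Cons c s)
  then show ?case by (cases c) auto
qed simp

definition nonneg_paths :: "nat \<Rightarrow> int \<Rightarrow> step list set" where
  "nonneg_paths n h = {s. length s = n \<and> stays_nonneg h s}"

definition path_weight :: "'a::comm_ring_1 \<Rightarrow> 'a \<Rightarrow> step list \<Rightarrow> 'a" where
  "path_weight x y s = prod_list (map (step_w x y) s)"

definition total_weight :: "'a::comm_ring_1 \<Rightarrow> 'a \<Rightarrow> nat \<Rightarrow> int \<Rightarrow> 'a" where
  "total_weight x y n h = sum (path_weight x y) (nonneg_paths n h)"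

lemma finite_nonneg_paths: "finite (nonneg_paths n h)"
proof -
  have "finite (UNIV :: step set)"
    by (metis (full_types) finite.emptyI finite.insertI insert_iff step.exhaust finite_subset subsetI)
  then have "finite {s. set s \<subseteq> (UNIV :: step set) \<and> length s = n}"
    by (rule finite_lists_length_eq)
  then show ?thesis
    by (rule finite_subset[rotated]) (auto simp: nonneg_paths_def)
qed

lemma total_weight_below_axis: "h < 0 \<Longrightarrow> total_weight x y n h = 0"
proof -
  assume "h < 0"
  then have "nonneg_paths n h = {}"
    using stays_nonneg_start by (force simp: nonneg_paths_def)
  then show ?thesis
    by (simp add: total_weight_def)
qed

lemma total_weight_0: "h \<ge> 0 \<Longrightarrow> total_weight x y 0 h = 1"
proof -
  assume "h \<ge> 0"
  then have "nonneg_paths 0 h = {[]}"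
    by (auto simp: nonneg_paths_def)
  then show ?thesis
    by (simp add: total_weight_def path_weight_def)
qed

lemma nonneg_paths_Suc:
  assumes "h \<ge> 0"
  shows "nonneg_paths (Suc n) h =
    (#) Up ` nonneg_paths n (h + 1) \<union> (#) Level ` nonneg_paths n h \<union> (#) Down ` nonneg_paths n (h - 1)"
proof (intro equalityI subsetI)
  fix s
  assume "s \<in> nonneg_paths (Suc n) h"
  then obtain c t where "s = c # t" "length t = n" "stays_nonneg (h + step_dy c) t"
    by (cases s) (auto simp: nonneg_paths_def)
  then show "s \<in> (#) Up ` nonneg_paths n (h + 1) \<union> (#) Level ` nonneg_paths n h
                 \<union> (#) Down ` nonneg_paths n (h - 1)"
    by (cases c) (auto simp: nonneg_paths_def)
qed (use assms in \<open>auto simp: nonneg_paths_def\<close>)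

lemma total_weight_Suc:
  assumes "h \<ge> 0"
  shows "total_weight x y (Suc n) h =
    total_weight x y n (h + 1) + (x + y) * total_weight x y n h + x * y * total_weight x y n (h - 1)"
proof -
  have first_step: "sum (path_weight x y) ((#) c ` nonneg_paths n g) = step_w x y c * total_weight x y n g"
    for c g
    by (simp add: sum.reindex total_weight_def path_weight_def sum_distrib_left)
  have "total_weight x y (Suc n) h =
      sum (path_weight x y) ((#) Up ` nonneg_paths n (h + 1)) + sum (path_weight x y) ((#) Level ` nonneg_paths n h)
      + sum (path_weight x y) ((#) Down ` nonneg_paths n (h - 1))"
    unfolding total_weight_def nonneg_paths_Suc[OF assms]
    by (subst sum.union_disjoint sum.union_disjoint; auto simp: finite_nonneg_paths)+
  then show ?thesis
    by (simp add: first_step)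
qed

lemma binomial_Suc_Suc_twice:
  "j \<ge> 1 \<Longrightarrow> (Suc (Suc m) choose Suc j) = (m choose (j - 1)) + 2 * (m choose j) + (m choose Suc j)"
  by (cases j) simp_all

lemma total_weight_minus_one_closed_form:
  "n \<ge> 1 \<Longrightarrow> total_weight (-1::real) (-1) n (int h) =
     (-1) ^ (n + h) * (real ((2 * n - 1) choose (n + h)) - real ((2 * n - 1) choose (n + h + 1)))"
proof (induction n arbitrary: h rule: nat_induct_at_least)
  case base
  show ?case
    by (cases h) (simp_all add: total_weight_Suc total_weight_0 total_weight_below_axis)
next
  case (Suc n)
  define m where "m = 2 * n - 1"
  let ?W = "total_weight (-1::real) (-1) n"
  have up: "?W (int h + 1) = (-1) ^ (n + h + 1) * (real (m choose (n + h + 1)) - real (m choose (n + h + 2)))"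
    using Suc.IH[of "Suc h"] by (simp add: m_def ac_simps)
  have level: "?W (int h) = (-1) ^ (n + h) * (real (m choose (n + h)) - real (m choose (n + h + 1)))"
    using Suc.IH[of h] by (simp add: m_def)
  have down: "?W (int h - 1) = (-1) ^ (n + h + 1) * (real (m choose (n + h - 1)) - real (m choose (n + h)))"
  proof (cases h)
    case 0
    \<comment> \<open>the right-hand side vanishes by symmetry of \<open>C(2n-1, \<cdot>)\<close>\<close>
    have "m = n + (n - 1)"
      using Suc.hyps by (simp add: m_def)
    then have "m choose (n - 1) = m choose n"
      by (metis binomial_symmetric le_add2 add_diff_cancel_right')
    then show ?thesis
      using 0 by (simp add: total_weight_below_axis)
  next
    case (Suc j)
    then show ?thesis
      using Suc.IH[of j] by (simp add: m_def of_nat_diff)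
  qed
  have pascal_lo: "real (Suc (Suc m) choose Suc (n + h)) =
      real (m choose (n + h - 1)) + 2 * real (m choose (n + h)) + real (m choose (n + h + 1))"
    using binomial_Suc_Suc_twice[of "n + h" m] Suc.hyps by simp
  have pascal_hi: "real (Suc (Suc m) choose Suc (n + h + 1)) =
      real (m choose (n + h)) + 2 * real (m choose (n + h + 1)) + real (m choose (n + h + 2))"
    using binomial_Suc_Suc_twice[of "n + h + 1" m] by simp
  have "total_weight (-1::real) (-1) (Suc n) (int h) = ?W (int h + 1) - 2 * ?W (int h) + ?W (int h - 1)"
    by (simp add: total_weight_Suc)
  also have "\<dots> = (-1) ^ (Suc n + h) *
      (real (Suc (Suc m) choose Suc (n + h)) - real (Suc (Suc m) choose Suc (n + h + 1)))"
    unfolding up level down pascal_lo pascal_hi by (simp add: algebra_simps)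
  also have "Suc (Suc m) = 2 * Suc n - 1"
    using Suc.hyps by (simp add: m_def)
  finally show ?case
    by simp
qed

lemma binomial_difference_eq_ballot:
  assumes "n \<ge> 1"
  shows "real ((2 * n - 1) choose (n + k)) - real ((2 * n - 1) choose (n + k + 1))
       = real (k + 1) / real n * real ((2 * n) choose (n + k + 1))"
proof -
  define N where "N = n + k + 1"
  have lower: "real N * real ((2 * n) choose N) = real (2 * n) * real ((2 * n - 1) choose (n + k))"
    using binomial_absorption[of "n + k" "2 * n"] unfolding N_def of_nat_mult[symmetric] by simp
  have upper: "real (2 * n - N) * real ((2 * n) choose N) = real (2 * n) * real ((2 * n - 1) choose N)"
    using binomial_absorb_comp[of "2 * n" N] unfolding of_nat_mult[symmetric] by simp
  show ?thesis
  proof (cases "N \<le> 2 * n")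
    case True
    have "real (2 * n) * (real ((2 * n - 1) choose (n + k)) - real ((2 * n - 1) choose N))
        = (real N - real (2 * n - N)) * real ((2 * n) choose N)"
      using lower upper by (simp add: algebra_simps)
    also have "real N - real (2 * n - N) = 2 * real (k + 1)"
      using True by (simp add: N_def of_nat_diff)
    finally show ?thesis
      using assms by (simp add: N_def field_simps)
  next
    case False
    then have vanish: "(2 * n - 1) choose (n + k) = 0" "(2 * n) choose N = 0" "(2 * n - 1) choose N = 0"
      using assms by (simp_all add: N_def)
    show ?thesis
      unfolding N_def[symmetric] vanish by simp
  qed
qed

lemma sum_Pplus_eq_total_weight:
  "(\<Sum>l\<in>{0..n + k}. Pplus x y n k l) = total_weight x y n (int k)"
proof -
  let ?end = "\<lambda>s. nat (int k + sum_list (map step_dy s))"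
  have paths_ending_at: "{s. nonneg_path n k l s} = {s \<in> nonneg_paths n (int k). ?end s = l}" for l
    using stays_nonneg_final_height
    by (auto simp: nonneg_path_def nonneg_paths_def prefix_heights_nonneg_iff_stays_nonneg[symmetric])
  have "?end s \<le> n + k" if "s \<in> nonneg_paths n (int k)" for s
    using height_gain_le_length[of s] that by (auto simp: nonneg_paths_def)
  then have "?end ` nonneg_paths n (int k) \<subseteq> {0..n + k}"
    by auto
  then have "total_weight x y n (int k) =
      (\<Sum>l\<in>{0..n + k}. sum (path_weight x y) {s \<in> nonneg_paths n (int k). ?end s = l})"
    unfolding total_weight_def by (intro sum.group[symmetric]) (auto simp: finite_nonneg_paths)
  then show ?thesis
    by (simp add: Pplus_def paths_ending_at path_weight_def)
qed

theorem mainTheorem17: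
  fixes n k :: nat
  assumes "n \<ge> 1"
  shows "(\<Sum>l\<in>{0..n+k}. Pplus (-1::real) (-1) n k l)
         = (-1) ^ (n + k) * (real (k + 1) / real n) * real ((2 * n) choose (n + k + 1))"
proof -
  have "(\<Sum>l\<in>{0..n+k}. Pplus (-1::real) (-1) n k l) = total_weight (-1) (-1) n (int k)"
    by (rule sum_Pplus_eq_total_weight)
  also have "\<dots> = (-1) ^ (n + k) * (real ((2 * n - 1) choose (n + k)) - real ((2 * n - 1) choose (n + k + 1)))"
    by (rule total_weight_minus_one_closed_form[OF assms])
  also have "\<dots> = (-1) ^ (n + k) * (real (k + 1) / real n * real ((2 * n) choose (n + k + 1)))"
    by (simp only: binomial_difference_eq_ballot[OF assms])
  finally show ?thesis
    by (simp only: mult.assoc)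
qed

end
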